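(* As a symmetric set-operad, $\mathrm{RW}$ is generated by the three trees $A_\prec$, $A_\mu$, $A_\odot$.
   Context: Red and white trees: $\mathrm{RW}(n)$ is the set of finite rooted trees (children unordered) whose nodes $z$ carry possibly empty label sets $L(z)\subseteq[n]$ partitioning $[n]$, each empty node having at least two children; labelled nodes are white, an empty node is red iff all its children are white. $S_n$ acts by relabelling. Composition $T_1\circ_xT_2$ ($T_1\in\mathrm{RW}(m)$, $T_2\in\mathrm{RW}(n)$): relabel $T_1$ by $y\mapsto y+n-1$ for $y>x$ and $T_2$ by $y\mapsto y+x-1$; $z\ni x$ in $T_1$, $r$ = root of $T_2$. (W) $r$ not red: remove $x$ from $L(z)$, add $L(r)$ to $L(z)$, children of $r$ become children of $z$. (R1) $r$ red, $T_1$ the single node $\{x\}$: result $T_2$. (R2) $r$ red and ($z$ has a child or $|L(z)|\ge2$): remove $x$ from $L(z)$, attach $T_2$ as child subtree of $z$. (R3) $r$ red, $z$ non-root leaf with $L(z)=\{x\}$: delete $z$, children of $r$ become children of the parent of $z$. Colours recomputed. With these compositions and actions $\mathrm{RW}$ is a symmetric set-operad. $A_\mu$ = single node $\{1,2\}$; $A_\prec$ = root $\{1\}$ with child $\{2\}$; $A_\odot$ = empty red root with children $\{1\},\{2\}$. *)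

theory Defs
  imports "HOL-Library.Multiset" "HOL-Combinatorics.Permutations"
begin

text \<open>Red and white trees: finite rooted trees with unordered children (a multiset
  of subtrees); every node carries a (possibly empty) label set.\<close>

datatype rwt = Node "nat set" "rwt multiset"

fun root_lab :: "rwt \<Rightarrow> nat set" where
  "root_lab (Node L C) = L"

fun kids :: "rwt \<Rightarrow> rwt multiset" where
  "kids (Node L C) = C"

primrec labsets :: "rwt \<Rightarrow> nat set multiset" where
  "labsets (Node L C) = {#L#} + \<Sum>\<^sub># (image_mset labsets C)"

primrec empty_ok :: "rwt \<Rightarrow> bool" where
  "empty_ok (Node L C) = ((L = {} \<longrightarrow> size C \<ge> 2) \<and> (\<forall>b\<in>#image_mset empty_ok C. b))"

text \<open>RW(n): the label sets of the nodes partition [n] = {1..n}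
  (each element of [n] lies in exactly one node, no other labels occur),
  and every empty node has at least two children.\<close>
definition RW :: "nat \<Rightarrow> rwt set" where
  "RW n = {T. (\<forall>y\<in>{1..n}. size (filter_mset (\<lambda>L. y \<in> L) (labsets T)) = 1)
             \<and> (\<forall>L\<in>#labsets T. L \<subseteq> {1..n}) \<and> empty_ok T}"

text \<open>White = labelled; an empty node is red iff all its children are white.\<close>
definition red :: "rwt \<Rightarrow> bool" where
  "red t \<longleftrightarrow> root_lab t = {} \<and> (\<forall>c\<in>#kids t. root_lab c \<noteq> {})"

primrec relabel :: "(nat \<Rightarrow> nat) \<Rightarrow> rwt \<Rightarrow> rwt" where
  "relabel f (Node L C) = Node (f ` L) (image_mset (relabel f) C)"

text \<open>Grafting the (already relabelled) tree S at the label x, below the root.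
  The result is the multiset of trees replacing the given subtree among the
  children of its parent (needed for case (R3)).\<close>
primrec repl :: "nat \<Rightarrow> rwt \<Rightarrow> rwt \<Rightarrow> rwt multiset" where
  "repl x S (Node L C) =
     (if x \<in> L then
        (if \<not> red S then {# Node (L - {x} \<union> root_lab S) (C + kids S) #}      \<comment> \<open>(W)\<close>
         else if C \<noteq> {#} \<or> card L \<ge> 2 then {# Node (L - {x}) (C + {#S#}) #}  \<comment> \<open>(R2)\<close>
         else kids S)                                                          \<comment> \<open>(R3)\<close>
      else {# Node L (\<Sum>\<^sub># (image_mset (repl x S) C)) #})"

fun graft_top :: "nat \<Rightarrow> rwt \<Rightarrow> rwt \<Rightarrow> rwt" where
  "graft_top x S (Node L C) =
     (if x \<in> L then
        (if \<not> red S then Node (L - {x} \<union> root_lab S) (C + kids S)       \<comment> \<open>(W)\<close>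
         else if C \<noteq> {#} \<or> card L \<ge> 2 then Node (L - {x}) (C + {#S#})   \<comment> \<open>(R2)\<close>
         else S)                                                           \<comment> \<open>(R1)\<close>
      else Node L (\<Sum>\<^sub># (image_mset (repl x S) C)))"

definition ocomp :: "nat \<Rightarrow> rwt \<Rightarrow> nat \<Rightarrow> rwt \<Rightarrow> rwt" where
  "ocomp n T1 x T2 =
     graft_top x (relabel (\<lambda>y. y + x - 1) T2)
                 (relabel (\<lambda>y. if y > x then y + n - 1 else y) T1)"

definition A_mu :: rwt where "A_mu = Node {1,2} {#}"
definition A_prec :: rwt where "A_prec = Node {1} {# Node {2} {#} #}"
definition A_odot :: rwt where "A_odot = Node {} {# Node {1} {#}, Node {2} {#} #}"

inductive_set generated :: "(nat \<times> rwt) set \<Rightarrow> (nat \<times> rwt) set" for G where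
  gen: "g \<in> G \<Longrightarrow> g \<in> generated G"
| unit: "(1, Node {1} {#}) \<in> generated G"
| comp: "(m, T1) \<in> generated G \<Longrightarrow> (n, T2) \<in> generated G \<Longrightarrow> 1 \<le> x \<Longrightarrow> x \<le> m
          \<Longrightarrow> (m + n - 1, ocomp n T1 x T2) \<in> generated G"
| act: "(n, T) \<in> generated G \<Longrightarrow> \<sigma> permutes {1..n}
          \<Longrightarrow> (n, relabel \<sigma> T) \<in> generated G"

end

theory Submission
  imports Defs
begin

text \<open>Work with trees whose labels are arbitrary finite sets of naturals, and call a tree
  realizable when some (equivalently, by the symmetric group action, every) bijective renaming
  of its labels onto [n] lies in the generated operad. Grafting commutes with injective
  renamings, so realizability is closed under grafting trees with disjoint labels. Every
  well-labelled tree other than a leaf and the three generators is a graft, at a fresh label x,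
  of two well-labelled trees of smaller weight (nodes plus labels): split off a second root
  label with A_mu (rule W), a red child (R2), a white non-leaf child (W at a fresh leaf x), or,
  when all children are leaves, one leaf below a labelled root with A_prec (W) or two leaves
  below an empty root with A_odot (R3). Strong induction on the weight concludes.\<close>

primrec labels :: "rwt \<Rightarrow> nat set" where
  "labels (Node L C) = L \<union> \<Union> (set_mset (image_mset labels C))"

primrec label_count :: "nat \<Rightarrow> rwt \<Rightarrow> nat" where
  "label_count y (Node L C) = (if y \<in> L then 1 else 0) + (\<Sum>c\<in>#C. label_count y c)"

primrec weight :: "rwt \<Rightarrow> nat" where
  "weight (Node L C) = 1 + card L + (\<Sum>c\<in>#C. weight c)"

definition well_labelled :: "rwt \<Rightarrow> bool" where
  "well_labelled T \<longleftrightarrow> empty_ok T \<and> (\<forall>y. label_count y T \<le> 1) \<and> finite (labels T)"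

lemma size_filter_sum_mset:
  "size (filter_mset P (\<Sum>\<^sub># M)) = (\<Sum>A\<in>#M. size (filter_mset P A))"
  by (induction M) auto

lemma member_le_sum_mset: "c \<in># M \<Longrightarrow> f c \<le> (\<Sum>d\<in>#M. f d :: nat)"
  by (metis le_add1 multi_member_split sum_mset.insert)

lemma sum_mset_pos_iff: "0 < (\<Sum>c\<in>#M. f c :: nat) \<longleftrightarrow> (\<exists>c\<in>#M. 0 < f c)"
  by (induction M) auto

lemma label_count_eq_size_filter_labsets:
  "label_count y T = size (filter_mset (\<lambda>L. y \<in> L) (labsets T))"
proof (induction T)
  case (Node L C)
  then have "(\<Sum>c\<in>#C. label_count y c) = (\<Sum>c\<in>#C. size (filter_mset (\<lambda>L. y \<in> L) (labsets c)))"
    by (intro arg_cong[where f = sum_mset] image_mset_cong) auto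
  then show ?case by (simp add: size_filter_sum_mset multiset.map_comp comp_def)
qed

lemma in_labels_iff_label_count_pos: "y \<in> labels T \<longleftrightarrow> 0 < label_count y T"
  by (induction T) (auto simp: sum_mset_pos_iff)

lemma well_labelled_NodeI:
  assumes "finite L" "L = {} \<Longrightarrow> 2 \<le> size C" "\<And>c. c \<in># C \<Longrightarrow> well_labelled c"
    "\<And>y. label_count y (Node L C) \<le> 1"
  shows "well_labelled (Node L C)"
  using assms by (auto simp: well_labelled_def)

lemma well_labelled_NodeD:
  assumes w: "well_labelled (Node L C)"
  shows "finite L" "L = {} \<Longrightarrow> 2 \<le> size C" "\<And>c. c \<in># C \<Longrightarrow> well_labelled c"
    "label_count y (Node L C) \<le> 1" "finite (labels (Node L C))"
proof -
  fix c assume c: "c \<in># C"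
  have "label_count z c \<le> 1" for z
    using member_le_sum_mset[OF c, of "label_count z"] w
    by (simp add: well_labelled_def) (metis add_leE le_trans)
  moreover have "finite (labels c)"
    using w c by (auto simp: well_labelled_def intro: finite_subset)
  ultimately show "well_labelled c"
    using w c by (simp add: well_labelled_def)
qed (use w in \<open>auto simp: well_labelled_def\<close>)

lemma weight_pos: "1 \<le> weight T"
  by (cases T) auto

lemma size_le_sum_weight: "size C \<le> (\<Sum>c\<in>#C. weight c)"
proof (induction C)
  case (add c C)
  then show ?case using weight_pos[of c] by simp
qed simp

lemma weight_ge_2: "well_labelled T \<Longrightarrow> 2 \<le> weight T"
proof (cases T)
  case (Node L C)
  assume w: "well_labelled T"
  show ?thesis
  proof (cases "L = {}")
    case True
    with w Node show ?thesis using size_le_sum_weight[of C] by (auto simp: well_labelled_def)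
  next
    case False
    with w Node have "1 \<le> card L" by (auto simp: well_labelled_def Suc_le_eq card_gt_0_iff)
    with Node show ?thesis by simp
  qed
qed

lemma label_count_fresh: "x \<notin> labels T \<Longrightarrow> label_count x T = 0"
  using in_labels_iff_label_count_pos by blast

lemma root_labels_disjoint_child:
  assumes w: "well_labelled (Node L C)" and c: "c \<in># C"
  shows "L \<inter> labels c = {}"
proof (rule ccontr)
  assume "L \<inter> labels c \<noteq> {}"
  then obtain y where "y \<in> L" "0 < label_count y c"
    using in_labels_iff_label_count_pos by blast
  with c member_le_sum_mset[OF c, of "label_count y"] well_labelled_NodeD(4)[OF w, of y]
  show False by force
qed

lemma child_labels_disjoint:
  assumes w: "well_labelled (Node L (add_mset c C))" and c': "c' \<in># C"
  shows "labels c \<inter> labels c' = {}"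
proof (rule ccontr)
  assume "labels c \<inter> labels c' \<noteq> {}"
  then obtain y where "0 < label_count y c" "0 < label_count y c'"
    using in_labels_iff_label_count_pos by blast
  with member_le_sum_mset[OF c', of "label_count y"] well_labelled_NodeD(4)[OF w, of y]
  show False by simp
qed

lemma relabel_relabel: "relabel g (relabel f T) = relabel (g \<circ> f) T"
  by (induction T) (auto simp: image_comp multiset.map_comp comp_def intro!: image_mset_cong)

lemma relabel_cong: "(\<And>y. y \<in> labels T \<Longrightarrow> f y = g y) \<Longrightarrow> relabel f T = relabel g T"
  by (induction T) (auto intro!: image_mset_cong)

lemma relabel_id: "relabel id T = T"
  by (induction T) (simp_all add: multiset.map_ident_strong)

lemma root_lab_relabel: "root_lab (relabel f T) = f ` root_lab T"
  by (cases T) simp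

lemma kids_relabel: "kids (relabel f T) = image_mset (relabel f) (kids T)"
  by (cases T) simp

lemma red_relabel: "red (relabel f T) \<longleftrightarrow> red T"
  by (auto simp: red_def root_lab_relabel kids_relabel)

lemma repl_fresh: "x \<notin> labels T \<Longrightarrow> repl x S T = {#T#}"
proof (induction T)
  case (Node L C)
  then have "image_mset (repl x S) C = image_mset (\<lambda>c. {#c#}) C"
    by (intro image_mset_cong) auto
  with Node.prems show ?case by simp
qed

lemma image_mset_relabel_sum_mset:
  assumes "\<And>c. c \<in># C \<Longrightarrow> image_mset (relabel H) (F c) = F' (relabel H c)"
  shows "image_mset (relabel H) (\<Sum>c\<in>#C. F c) = (\<Sum>c\<in>#image_mset (relabel H) C. F' c)"
  using assms by (induction C) auto

lemma inj_on_insert_image: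
  assumes "inj_on H (insert x L)"
  shows "H x \<in> H ` L \<longleftrightarrow> x \<in> L" "H ` L - {H x} = H ` (L - {x})" "card (H ` L) = card L"
  using assms by (auto simp: inj_on_def intro!: card_image)

lemma repl_relabel:
  "inj_on H (insert x (labels T)) \<Longrightarrow>
   repl (H x) (relabel H S) (relabel H T) = image_mset (relabel H) (repl x S T)"
proof (induction T)
  case (Node L C)
  have "inj_on H (insert x L)"
    using Node.prems by (rule inj_on_subset) auto
  note image_facts = inj_on_insert_image[OF this]
  have "image_mset (relabel H) (repl x S c) = repl (H x) (relabel H S) (relabel H c)"
    if "c \<in># C" for c
  proof -
    have "inj_on H (insert x (labels c))"
      using Node.prems by (rule inj_on_subset) (use that in auto)
    then show ?thesis using Node.IH[OF that] by simp
  qed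
  then show ?case
    by (simp add: image_facts image_mset_relabel_sum_mset red_relabel root_lab_relabel
        kids_relabel image_Un)
qed

lemma graft_top_relabel:
  assumes inj: "inj_on H (insert x (labels T))"
  shows "graft_top (H x) (relabel H S) (relabel H T) = relabel H (graft_top x S T)"
proof (cases T)
  case (Node L C)
  have "inj_on H (insert x L)"
    using inj Node by (auto intro: inj_on_subset)
  note image_facts = inj_on_insert_image[OF this]
  have "image_mset (relabel H) (repl x S c) = repl (H x) (relabel H S) (relabel H c)"
    if "c \<in># C" for c
  proof -
    have "inj_on H (insert x (labels c))"
      using inj by (rule inj_on_subset) (use Node that in auto)
    then show ?thesis by (simp add: repl_relabel)
  qed
  then show ?thesis
    using Node by (simp add: image_facts image_mset_relabel_sum_mset red_relabel
        root_lab_relabel kids_relabel image_Un)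
qed

definition realizable :: "(nat \<times> rwt) set \<Rightarrow> rwt \<Rightarrow> bool" where
  "realizable G T \<longleftrightarrow>
     (\<exists>f. bij_betw f (labels T) {1..card (labels T)} \<and> (card (labels T), relabel f T) \<in> generated G)"

lemma generated_relabel_bij:
  assumes gen: "(n, relabel f0 T) \<in> generated G"
    and f0: "bij_betw f0 (labels T) {1..n}" and f: "bij_betw f (labels T) {1..n}"
  shows "(n, relabel f T) \<in> generated G"
proof -
  define \<sigma> where "\<sigma> y = (if y \<in> {1..n} then f (inv_into (labels T) f0 y) else y)" for y
  have "bij_betw (f \<circ> inv_into (labels T) f0) {1..n} {1..n}"
    using bij_betw_trans[OF bij_betw_inv_into[OF f0] f] .
  then have "bij_betw \<sigma> {1..n} {1..n}"
    by (rule bij_betw_cong[THEN iffD1, rotated]) (simp add: \<sigma>_def)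
  then have "\<sigma> permutes {1..n}"
    by (rule bij_imp_permutes) (auto simp: \<sigma>_def)
  with gen have "(n, relabel \<sigma> (relabel f0 T)) \<in> generated G"
    by (rule generated.act)
  moreover have "relabel \<sigma> (relabel f0 T) = relabel f T"
    unfolding relabel_relabel
  proof (rule relabel_cong)
    fix y assume y: "y \<in> labels T"
    have "f0 y \<in> {1..n}" using f0 y by (rule bij_betw_apply)
    with y show "(\<sigma> \<circ> f0) y = f y"
      by (simp add: \<sigma>_def inv_into_f_f bij_betw_imp_inj_on[OF f0])
  qed
  ultimately show ?thesis by simp
qed

lemma realizable_relabel:
  "realizable G T \<Longrightarrow> bij_betw f (labels T) {1..card (labels T)} \<Longrightarrow>
   (card (labels T), relabel f T) \<in> generated G"
  unfolding realizable_def using generated_relabel_bij by blast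

lemma realizableI:
  "bij_betw f (labels T) {1..n} \<Longrightarrow> (n, relabel f T) \<in> generated G \<Longrightarrow> realizable G T"
  unfolding realizable_def using bij_betw_same_card by fastforce

lemma shift_bij_betw:
  "1 \<le> (m::nat) \<Longrightarrow> bij_betw (\<lambda>y. y + m - 1) {1..k} {m..m + k - 1}"
proof -
  assume m: "1 \<le> m"
  then have "(\<lambda>y. y + m - 1) = (\<lambda>y. y + (m - 1))" by auto
  moreover have "(\<lambda>y. y + (m - 1)) ` {1..k} = {1 + (m - 1)..k + (m - 1)}"
    using image_add_atLeastAtMost[of "m - 1" 1 k] by (simp add: add.commute)
  moreover have "{1 + (m - 1)..k + (m - 1)} = {m..m + k - 1}"
    using m by auto
  ultimately show ?thesis
    by (simp add: bij_betw_def inj_on_def)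
qed

lemma ocomp_relabel_graft_top:
  assumes f1: "bij_betw f1 (labels T1) {1..m}" and x: "x \<in> labels T1" and f1x: "f1 x = m"
    and f2: "bij_betw f2 (labels T2) {1..k}" and disj: "labels T1 \<inter> labels T2 = {}"
  obtains H where "bij_betw H (labels T1 - {x} \<union> labels T2) {1..m + k - 1}"
    and "ocomp k (relabel f1 T1) m (relabel f2 T2) = relabel H (graft_top x T2 T1)"
proof
  have m: "1 \<le> m" using bij_betw_apply[OF f1 x] f1x by simp
  define H where "H z = (if z \<in> labels T2 then f2 z + m - 1 else f1 z)" for z
  have H1: "H z = f1 z" if "z \<in> labels T1" for z using that disj by (auto simp: H_def)
  have H2: "H z = f2 z + m - 1" if "z \<in> labels T2" for z using that by (simp add: H_def)
  have "bij_betw H (labels T1 - {x}) {1..m - 1}"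
  proof -
    have "bij_betw f1 (labels T1 - {x}) ({1..m} - {m})"
      using bij_betw_DiffI[OF f1, of "{x}" "{m}"] x f1x m by (simp add: bij_betw_def)
    moreover have "{1..m} - {m} = {1..m - 1}" using m by auto
    ultimately show ?thesis using bij_betw_cong[of "labels T1 - {x}" H f1] H1 by simp
  qed
  moreover have "bij_betw H (labels T2) {m..m + k - 1}"
    using bij_betw_trans[OF f2 shift_bij_betw[OF m]] bij_betw_cong[of "labels T2" H] H2
    by (simp add: comp_def)
  ultimately have "bij_betw H (labels T1 - {x} \<union> labels T2) ({1..m - 1} \<union> {m..m + k - 1})"
    by (rule bij_betw_combine) auto
  moreover have "{1..m - 1} \<union> {m..m + k - 1} = {1..m + k - 1}" using m by auto
  ultimately show "bij_betw H (labels T1 - {x} \<union> labels T2) {1..m + k - 1}" by simp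
  have "inj_on H (insert x (labels T1))"
    using inj_on_cong[of "labels T1" H f1] H1 bij_betw_imp_inj_on[OF f1] x
    by (simp add: insert_absorb)
  then have "relabel H (graft_top x T2 T1) = graft_top (H x) (relabel H T2) (relabel H T1)"
    by (rule graft_top_relabel[symmetric])
  also have "H x = m" using H1[OF x] f1x by simp
  also have "relabel H T2 = relabel (\<lambda>y. y + m - 1) (relabel f2 T2)"
    unfolding relabel_relabel by (rule relabel_cong) (simp add: H2)
  also have "relabel H T1 = relabel (\<lambda>y. if y > m then y + k - 1 else y) (relabel f1 T1)"
    unfolding relabel_relabel
    by (rule relabel_cong) (use bij_betw_apply[OF f1] H1 in fastforce)
  finally show "ocomp k (relabel f1 T1) m (relabel f2 T2) = relabel H (graft_top x T2 T1)"
    by (simp add: ocomp_def)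
qed

lemma realizable_graft_top:
  assumes r1: "realizable G T1" and r2: "realizable G T2"
    and x: "x \<in> labels T1" and disj: "labels T1 \<inter> labels T2 = {}"
    and labels_T: "labels (graft_top x T2 T1) = labels T1 - {x} \<union> labels T2"
  shows "realizable G (graft_top x T2 T1)"
proof -
  define m where "m = card (labels T1)"
  define k where "k = card (labels T2)"
  obtain g1 where g1: "bij_betw g1 (labels T1) {1..m}"
    using r1 unfolding realizable_def m_def by blast
  \<comment> \<open>the transposition makes x the last input m, where T2 is grafted\<close>
  define f1 where "f1 = Transposition.transpose (g1 x) m \<circ> g1"
  have f1x: "f1 x = m" by (simp add: f1_def)
  have "g1 x \<in> {1..m}" using g1 x by (rule bij_betw_apply)
  then have "Transposition.transpose (g1 x) m permutes {1..m}"
    by (intro permutes_swap_id) auto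
  then have f1: "bij_betw f1 (labels T1) {1..m}"
    using g1 unfolding f1_def by (meson bij_betw_trans permutes_imp_bij)
  obtain f2 where f2: "bij_betw f2 (labels T2) {1..k}"
    using r2 unfolding realizable_def k_def by blast
  have "(m + k - 1, ocomp k (relabel f1 T1) m (relabel f2 T2)) \<in> generated G"
    using generated.comp[OF realizable_relabel[OF r1 f1[unfolded m_def]]
        realizable_relabel[OF r2 f2[unfolded k_def]], of m] bij_betw_apply[OF f1 x]
    by (simp add: m_def k_def)
  moreover obtain H where "bij_betw H (labels T1 - {x} \<union> labels T2) {1..m + k - 1}"
    and "ocomp k (relabel f1 T1) m (relabel f2 T2) = relabel H (graft_top x T2 T1)"
    by (rule ocomp_relabel_graft_top[OF f1 x f1x f2 disj])
  ultimately show ?thesis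
    using labels_T by (auto intro: realizableI)
qed

lemma realizable_leaf: "realizable G (Node {a} {#})"
proof (rule realizableI[where f = "\<lambda>_. 1" and n = 1])
  show "(1, relabel (\<lambda>_. 1) (Node {a} {#})) \<in> generated G"
    using generated.unit by simp
qed (simp add: bij_betw_def)

lemma realizable_two_labels:
  assumes labels_T: "labels T = {a, b}" and ab: "a \<noteq> b"
    and gen: "(2, relabel (\<lambda>z. if z = a then 1 else 2) T) \<in> G"
  shows "realizable G T"
proof (rule realizableI[OF _ generated.gen[OF gen]])
  have "{1..2::nat} = {1, 2}" by auto
  then show "bij_betw (\<lambda>z. if z = a then 1 else 2::nat) (labels T) {1..2}"
    using labels_T ab by (auto simp: bij_betw_def)
qed

abbreviation RW_generators :: "(nat \<times> rwt) set" where
  "RW_generators \<equiv> {(2, A_prec), (2, A_mu), (2, A_odot)}"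

lemma realizable_mu: "a \<noteq> b \<Longrightarrow> realizable RW_generators (Node {a, b} {#})"
  by (rule realizable_two_labels[of _ a b]) (auto simp: A_mu_def)

lemma realizable_prec: "a \<noteq> b \<Longrightarrow> realizable RW_generators (Node {a} {#Node {b} {#}#})"
  by (rule realizable_two_labels[of _ a b]) (auto simp: A_prec_def)

lemma realizable_odot:
  "a \<noteq> b \<Longrightarrow> realizable RW_generators (Node {} {#Node {a} {#}, Node {b} {#}#})"
  by (rule realizable_two_labels[of _ a b]) (auto simp: A_odot_def add_mset_commute)

lemma label_count_le_one_fresh:
  assumes w: "well_labelled T" and x: "x \<notin> labels T"
    and le: "\<And>y. label_count y S \<le> label_count y T + (if y = x then 1 else 0)"
  shows "label_count y S \<le> 1"
proof (cases "y = x")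
  case True
  then show ?thesis using le[of y] label_count_fresh[OF x] by simp
next
  case False
  then show ?thesis using le[of y] w by (simp add: well_labelled_def le_trans)
qed

lemma well_labelled_leaf: "well_labelled (Node {b} {#})"
  by (rule well_labelled_NodeI) auto

lemma leaf_if_weight_le_2:
  assumes w: "well_labelled T" and wt: "weight T \<le> 2"
  obtains b where "T = Node {b} {#}"
proof (cases T)
  case (Node L C)
  note D = well_labelled_NodeD[OF w[unfolded Node]]
  have "C = {#}"
  proof (rule ccontr)
    assume "C \<noteq> {#}"
    then obtain d where d: "d \<in># C" by blast
    with D(3) have "2 \<le> weight d" by (simp add: weight_ge_2)
    with member_le_sum_mset[OF d, of weight] wt Node show False by simp
  qed
  moreover from this D(1,2) have "L \<noteq> {}" "finite L" by auto
  with wt Node \<open>C = {#}\<close> have "card L = 1"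
    by (simp add: Suc_le_eq card_gt_0_iff le_antisym)
  then obtain b where "L = {b}" by (rule card_1_singletonE)
  with Node \<open>C = {#}\<close> show ?thesis using that by simp
qed

lemma realizable_split_root_label:
  assumes IH: "\<And>S. weight S < weight (Node L C) \<Longrightarrow> well_labelled S \<Longrightarrow> realizable RW_generators S"
    and w: "well_labelled (Node L C)" and x: "x \<notin> labels (Node L C)" and L: "2 \<le> card L"
  shows "realizable RW_generators (Node L C)"
proof -
  note D = well_labelled_NodeD[OF w]
  obtain a where a: "a \<in> L" using L by fastforce
  have L_a: "L - {a} \<noteq> {}"
  proof
    assume "L - {a} = {}"
    with L card_Diff_singleton[OF a] show False by simp
  qed
  define T2 where "T2 = Node (L - {a}) C"
  have w2: "well_labelled T2"
    unfolding T2_def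
  proof (rule well_labelled_NodeI)
    show "label_count y (Node (L - {a}) C) \<le> 1" for y
      by (rule le_trans[OF _ D(4)[of y]]) simp
  qed (use D L_a in auto)
  have "weight T2 < weight (Node L C)"
    using a L by (simp add: T2_def card_Diff_singleton)
  then have r2: "realizable RW_generators T2" using IH w2 by blast
  have T: "Node L C = graft_top x T2 (Node {a, x} {#})"
    using a x L_a by (auto simp: T2_def red_def)
  show ?thesis unfolding T
  proof (rule realizable_graft_top[OF realizable_mu r2])
    show "a \<noteq> x" "x \<in> labels (Node {a, x} {#})" using a x by auto
    show "labels (Node {a, x} {#}) \<inter> labels T2 = {}"
      using x root_labels_disjoint_child[OF w] a by (auto simp: T2_def)
    show "labels (graft_top x T2 (Node {a, x} {#})) = labels (Node {a, x} {#}) - {x} \<union> labels T2"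
      unfolding T[symmetric] using a x by (auto simp: T2_def)
  qed
qed

lemma realizable_split_red_child:
  assumes IH: "\<And>S. weight S < weight (Node L C) \<Longrightarrow> well_labelled S \<Longrightarrow> realizable RW_generators S"
    and w: "well_labelled (Node L C)" and x: "x \<notin> labels (Node L C)"
    and C: "C = add_mset c C'" and c: "red c"
  shows "realizable RW_generators (Node L C)"
proof -
  note D = well_labelled_NodeD[OF w]
  define T1 where "T1 = Node (insert x L) C'"
  have w1: "well_labelled T1"
    unfolding T1_def
  proof (rule well_labelled_NodeI)
    show "label_count y (Node (insert x L) C') \<le> 1" for y
      by (rule label_count_le_one_fresh[OF w x]) (simp add: C)
  qed (use D C in auto)
  have wc: "well_labelled c" using D(3) C by simp
  have "weight T1 < weight (Node L C)"
    using weight_ge_2[OF wc] D(1) x C by (simp add: T1_def)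
  then have r1: "realizable RW_generators T1" using IH w1 by blast
  have "weight c < weight (Node L C)" using C by simp
  then have rc: "realizable RW_generators c" using IH wc by blast
  have "C' \<noteq> {#} \<or> 2 \<le> card (insert x L)"
  proof (cases "L = {}")
    case True
    then show ?thesis using D(2) C by auto
  next
    case False
    then have "1 \<le> card L" using D(1) by (simp add: Suc_le_eq card_gt_0_iff)
    then show ?thesis using D(1) x by simp
  qed
  then have T: "Node L C = graft_top x c T1"
    using c x C by (simp add: T1_def)
  show ?thesis unfolding T
  proof (rule realizable_graft_top[OF r1 rc])
    show "x \<in> labels T1" by (simp add: T1_def)
    show "labels T1 \<inter> labels c = {}"
      using x C root_labels_disjoint_child[OF w] child_labels_disjoint[OF w[unfolded C]]
      by (fastforce simp: T1_def)
    show "labels (graft_top x c T1) = labels T1 - {x} \<union> labels c"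
      unfolding T[symmetric] using x C by (auto simp: T1_def)
  qed
qed

lemma realizable_split_white_child:
  assumes IH: "\<And>S. weight S < weight (Node L C) \<Longrightarrow> well_labelled S \<Longrightarrow> realizable RW_generators S"
    and w: "well_labelled (Node L C)" and x: "x \<notin> labels (Node L C)"
    and C: "C = add_mset c C'" and c: "\<not> red c" and weight_c: "3 \<le> weight c"
  shows "realizable RW_generators (Node L C)"
proof -
  note D = well_labelled_NodeD[OF w]
  define T1 where "T1 = Node L (add_mset (Node {x} {#}) C')"
  have w1: "well_labelled T1"
    unfolding T1_def
  proof (rule well_labelled_NodeI)
    show "label_count y (Node L (add_mset (Node {x} {#}) C')) \<le> 1" for y
      by (rule label_count_le_one_fresh[OF w x]) (simp add: C)
  qed (use D C well_labelled_leaf in auto)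
  have wc: "well_labelled c" using D(3) C by simp
  have "weight T1 < weight (Node L C)"
    using weight_c C by (simp add: T1_def)
  then have r1: "realizable RW_generators T1" using IH w1 by blast
  have "weight c < weight (Node L C)" using C by simp
  then have rc: "realizable RW_generators c" using IH wc by blast
  have "image_mset (repl x c) C' = image_mset (\<lambda>t. {#t#}) C'"
    using x C by (intro image_mset_cong repl_fresh) auto
  then have T: "Node L C = graft_top x c T1"
    using c x C by (cases c) (simp add: T1_def)
  show ?thesis unfolding T
  proof (rule realizable_graft_top[OF r1 rc])
    show "x \<in> labels T1" by (simp add: T1_def)
    show "labels T1 \<inter> labels c = {}"
      using x C root_labels_disjoint_child[OF w] child_labels_disjoint[OF w[unfolded C]]
      by (fastforce simp: T1_def)
    show "labels (graft_top x c T1) = labels T1 - {x} \<union> labels c"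
      unfolding T[symmetric] using x C by (auto simp: T1_def)
  qed
qed

lemma realizable_split_leaf_below_singleton_root:
  assumes IH: "\<And>S. weight S < weight (Node {a} C) \<Longrightarrow> well_labelled S \<Longrightarrow> realizable RW_generators S"
    and w: "well_labelled (Node {a} C)" and x: "x \<notin> labels (Node {a} C)"
    and C: "C = add_mset (Node {b} {#}) C'" and C': "C' \<noteq> {#}"
  shows "realizable RW_generators (Node {a} C)"
proof -
  note D = well_labelled_NodeD[OF w]
  have ab: "a \<noteq> b" using root_labels_disjoint_child[OF w, of "Node {b} {#}"] C by auto
  define T1 where "T1 = Node {x} C'"
  define T2 where "T2 = Node {a} {#Node {b} {#}#}"
  have w1: "well_labelled T1"
    unfolding T1_def
  proof (rule well_labelled_NodeI)
    show "label_count y (Node {x} C') \<le> 1" for y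
      by (rule label_count_le_one_fresh[OF w x]) (simp add: C)
  qed (use D C in auto)
  have "weight T1 < weight (Node {a} C)"
    using C by (simp add: T1_def)
  then have r1: "realizable RW_generators T1" using IH w1 by blast
  have T: "Node {a} C = graft_top x T2 T1"
    using C by (simp add: T1_def T2_def red_def)
  show ?thesis unfolding T
  proof (rule realizable_graft_top[OF r1])
    show "realizable RW_generators T2" unfolding T2_def using ab by (rule realizable_prec)
    show "x \<in> labels T1" by (simp add: T1_def)
    show "labels T1 \<inter> labels T2 = {}"
      using x C root_labels_disjoint_child[OF w] child_labels_disjoint[OF w[unfolded C]]
      by (fastforce simp: T1_def T2_def)
    show "labels (graft_top x T2 T1) = labels T1 - {x} \<union> labels T2"
      unfolding T[symmetric] using x C by (auto simp: T1_def T2_def)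
  qed
qed

lemma realizable_split_leaves_below_empty_root:
  assumes IH: "\<And>S. weight S < weight (Node {} C) \<Longrightarrow> well_labelled S \<Longrightarrow> realizable RW_generators S"
    and w: "well_labelled (Node {} C)" and x: "x \<notin> labels (Node {} C)"
    and C: "C = add_mset (Node {a} {#}) (add_mset (Node {b} {#}) C'')" and C'': "C'' \<noteq> {#}"
  shows "realizable RW_generators (Node {} C)"
proof -
  note D = well_labelled_NodeD[OF w]
  have ab: "a \<noteq> b" using child_labels_disjoint[OF w[unfolded C], of "Node {b} {#}"] by auto
  define T1 where "T1 = Node {} (add_mset (Node {x} {#}) C'')"
  define T2 where "T2 = Node {} {#Node {a} {#}, Node {b} {#}#}"
  have w1: "well_labelled T1"
    unfolding T1_def
  proof (rule well_labelled_NodeI)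
    show "2 \<le> size (add_mset (Node {x} {#}) C'')"
      using C'' by (simp add: Suc_le_eq nonempty_has_size)
    show "label_count y (Node {} (add_mset (Node {x} {#}) C'')) \<le> 1" for y
      by (rule label_count_le_one_fresh[OF w x]) (simp add: C)
  qed (use D C well_labelled_leaf in auto)
  have "weight T1 < weight (Node {} C)"
    using C by (simp add: T1_def)
  then have r1: "realizable RW_generators T1" using IH w1 by blast
  have "image_mset (repl x T2) C'' = image_mset (\<lambda>t. {#t#}) C''"
    using x C by (intro image_mset_cong repl_fresh) auto
  then have T: "Node {} C = graft_top x T2 T1"
    using C by (simp add: T1_def T2_def red_def)
  show ?thesis unfolding T
  proof (rule realizable_graft_top[OF r1])
    show "realizable RW_generators T2" unfolding T2_def using ab by (rule realizable_odot)
    show "x \<in> labels T1" by (simp add: T1_def)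
    show "labels T1 \<inter> labels T2 = {}"
      using x C child_labels_disjoint[OF w[unfolded C]]
        child_labels_disjoint[OF w[unfolded C add_mset_commute[of "Node {a} {#}"]]]
      by (fastforce simp: T1_def T2_def)
    show "labels (graft_top x T2 T1) = labels T1 - {x} \<union> labels T2"
      unfolding T[symmetric] using x C by (auto simp: T1_def T2_def)
  qed
qed

lemma realizable_if_leaf_children:
  assumes IH: "\<And>S. weight S < weight (Node L C) \<Longrightarrow> well_labelled S \<Longrightarrow> realizable RW_generators S"
    and w: "well_labelled (Node L C)" and x: "x \<notin> labels (Node L C)"
    and L: "card L \<le> 1" and leaves: "\<forall>c\<in>#C. \<exists>b. c = Node {b} {#}"
  shows "realizable RW_generators (Node L C)"
proof (cases "L = {}")
  case True
  with well_labelled_NodeD(2)[OF w] have size_C: "2 \<le> size C" by simp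
  then obtain c1 C1 where C1: "C = add_mset c1 C1"
    by (metis multiset_cases not_numeral_le_zero size_empty)
  with size_C obtain c2 C'' where "C1 = add_mset c2 C''"
    by (metis Suc_1 Suc_le_mono multiset_cases not_one_le_zero size_add_mset size_empty)
  with C1 have C: "C = add_mset c1 (add_mset c2 C'')" by simp
  with leaves obtain a b where c1: "c1 = Node {a} {#}" and c2: "c2 = Node {b} {#}" by auto
  have ab: "a \<noteq> b" using child_labels_disjoint[OF w[unfolded C], of c2] c1 c2 by auto
  show ?thesis
  proof (cases "C'' = {#}")
    case True
    with C c1 c2 ab \<open>L = {}\<close> show ?thesis by (simp add: realizable_odot)
  next
    case False
    with \<open>L = {}\<close> show ?thesis
      using realizable_split_leaves_below_empty_root[OF IH[unfolded \<open>L = {}\<close>]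
          w[unfolded \<open>L = {}\<close>] x[unfolded \<open>L = {}\<close>] C[unfolded c1 c2]]
      by simp
  qed
next
  case False
  with L well_labelled_NodeD(1)[OF w] have "card L = 1"
    by (simp add: le_antisym Suc_le_eq card_gt_0_iff)
  then obtain a where a: "L = {a}" by (rule card_1_singletonE)
  show ?thesis
  proof (cases "C = {#}")
    case True
    with a show ?thesis by (simp add: realizable_leaf)
  next
    case False
    with leaves obtain b C' where C: "C = add_mset (Node {b} {#}) C'"
      by (metis multiset_nonemptyE multi_member_split)
    have ab: "a \<noteq> b" using root_labels_disjoint_child[OF w, of "Node {b} {#}"] a C by auto
    show ?thesis
    proof (cases "C' = {#}")
      case True
      with C a ab show ?thesis by (simp add: realizable_prec)
    next
      case False
      with a show ?thesis
        using realizable_split_leaf_below_singleton_root[OF IH[unfolded a] w[unfolded a]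
            x[unfolded a] C]
        by simp
    qed
  qed
qed

lemma realizable_if_well_labelled: "well_labelled T \<Longrightarrow> realizable RW_generators T"
proof (induction T rule: measure_induct_rule[where f = weight])
  case (less T)
  obtain L C where T: "T = Node L C" by (cases T)
  with less have IH: "\<And>S. weight S < weight (Node L C) \<Longrightarrow> well_labelled S \<Longrightarrow> realizable RW_generators S"
    and w: "well_labelled (Node L C)" by auto
  obtain x where x: "x \<notin> labels (Node L C)"
    using ex_new_if_finite[OF infinite_UNIV_nat well_labelled_NodeD(5)[OF w]] by blast
  consider (two_labels) "2 \<le> card L"
    | (red_child) c C' where "C = add_mset c C'" "red c"
    | (white_child) c C' where "C = add_mset c C'" "\<not> red c" "3 \<le> weight c"
    | (leaf_children) "card L \<le> 1" "\<forall>c\<in>#C. \<exists>b. c = Node {b} {#}"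
  proof (cases "2 \<le> card L \<or> (\<exists>c\<in>#C. red c \<or> 3 \<le> weight c)")
    case True
    show ?thesis
    proof (cases "2 \<le> card L")
      case False
      with True obtain c where c: "c \<in># C" "red c \<or> 3 \<le> weight c" by blast
      then obtain C' where "C = add_mset c C'" by (metis multi_member_split)
      with c that(2,3) show ?thesis by blast
    qed (rule that(1))
  next
    case False
    have "\<exists>b. c = Node {b} {#}" if c: "c \<in># C" for c
    proof -
      from False c have "weight c \<le> 2" by auto
      with leaf_if_weight_le_2[OF well_labelled_NodeD(3)[OF w c]] show ?thesis by blast
    qed
    moreover from False have "card L \<le> 1" by simp
    ultimately show ?thesis using that(4) by blast
  qed
  then show ?case
  proof cases
    case two_labels
    with IH w x show ?thesis unfolding T by (rule realizable_split_root_label)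
  next
    case red_child
    with IH w x show ?thesis unfolding T by (rule realizable_split_red_child)
  next
    case white_child
    with IH w x show ?thesis unfolding T by (rule realizable_split_white_child)
  next
    case leaf_children
    with IH w x show ?thesis unfolding T by (rule realizable_if_leaf_children)
  qed
qed

lemma RW_well_labelled:
  assumes "T \<in> RW n"
  shows "well_labelled T" "labels T = {1..n}"
proof -
  from assms have once: "\<And>y. y \<in> {1..n} \<Longrightarrow> label_count y T = 1"
    and within: "\<forall>L\<in>#labsets T. L \<subseteq> {1..n}" and "empty_ok T"
    unfolding RW_def by (auto simp: label_count_eq_size_filter_labsets)
  have outside: "label_count y T = 0" if "y \<notin> {1..n}" for y
    using within that by (fastforce simp: label_count_eq_size_filter_labsets)
  show labels_T: "labels T = {1..n}"
    using once outside by (force simp: in_labels_iff_label_count_pos)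
  have "label_count y T \<le> 1" for y
    using once[of y] outside[of y] by (cases "y \<in> {1..n}") simp_all
  with \<open>empty_ok T\<close> labels_T show "well_labelled T"
    by (simp add: well_labelled_def)
qed

theorem mainTheorem15:
  "\<forall>n. \<forall>T \<in> RW n. (n, T) \<in> generated {(2, A_prec), (2, A_mu), (2, A_odot)}"
proof (intro allI ballI)
  fix n T assume "T \<in> RW n"
  then have w: "well_labelled T" and labels_T: "labels T = {1..n}" by (rule RW_well_labelled)+
  have "(card (labels T), relabel id T) \<in> generated RW_generators"
    by (rule realizable_relabel[OF realizable_if_well_labelled[OF w]]) (simp add: labels_T)
  then show "(n, T) \<in> generated {(2, A_prec), (2, A_mu), (2, A_odot)}"
    by (simp add: labels_T relabel_id)
qed

end
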